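(* (a) If $G\in\mathcal U$ has at least one support vertex $s$, then the graph $G'$ obtained from $G$ by adding a new vertex $w$ and the edge $sw$ is also in $\mathcal U$. (b) If $G\in\mathcal U$ has a strong support vertex $s$ and $w$ is a leaf adjacent to $s$, then $G-w\in\mathcal U$.
   Context: All graphs are finite and simple. A set $P\subseteq V(G)$ is an open packing if no two distinct vertices of $P$ have a common neighbor; it is maximal if maximal under inclusion among open packings. $\rho^o(G)$ is the maximum size of an open packing and $\rho^o_L(G)$ the minimum size of a maximal open packing; $\mathcal U$ is the class of graphs with $\rho^o_L(G)=\rho^o(G)$. A leaf is a vertex of degree $1$, a support vertex is a vertex adjacent to at least one leaf, and a strong support vertex is one adjacent to at least two leaves. *)

theory Defs
  imports Main
begin

definition graph :: "'a set \<Rightarrow> ('a \<Rightarrow> 'a \<Rightarrow> bool) \<Rightarrow> bool" where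
  "graph V E \<longleftrightarrow> finite V \<and> (\<forall>x y. E x y \<longrightarrow> x \<in> V \<and> y \<in> V)
     \<and> (\<forall>x y. E x y \<longrightarrow> E y x) \<and> (\<forall>x. \<not> E x x)"

definition nbhd :: "'a set \<Rightarrow> ('a \<Rightarrow> 'a \<Rightarrow> bool) \<Rightarrow> 'a \<Rightarrow> 'a set" where
  "nbhd V E v = {u \<in> V. E v u}"

definition degree :: "'a set \<Rightarrow> ('a \<Rightarrow> 'a \<Rightarrow> bool) \<Rightarrow> 'a \<Rightarrow> nat" where
  "degree V E v = card (nbhd V E v)"

definition leaf :: "'a set \<Rightarrow> ('a \<Rightarrow> 'a \<Rightarrow> bool) \<Rightarrow> 'a \<Rightarrow> bool" where
  "leaf V E v \<longleftrightarrow> v \<in> V \<and> degree V E v = 1"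

definition support_vertex :: "'a set \<Rightarrow> ('a \<Rightarrow> 'a \<Rightarrow> bool) \<Rightarrow> 'a \<Rightarrow> bool" where
  "support_vertex V E s \<longleftrightarrow> s \<in> V \<and> (\<exists>l \<in> V. E s l \<and> leaf V E l)"

definition strong_support_vertex :: "'a set \<Rightarrow> ('a \<Rightarrow> 'a \<Rightarrow> bool) \<Rightarrow> 'a \<Rightarrow> bool" where
  "strong_support_vertex V E s \<longleftrightarrow> s \<in> V \<and>
     (\<exists>l1 \<in> V. \<exists>l2 \<in> V. l1 \<noteq> l2 \<and> E s l1 \<and> E s l2 \<and> leaf V E l1 \<and> leaf V E l2)"

definition open_packing :: "'a set \<Rightarrow> ('a \<Rightarrow> 'a \<Rightarrow> bool) \<Rightarrow> 'a set \<Rightarrow> bool" where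
  "open_packing V E P \<longleftrightarrow> P \<subseteq> V \<and>
     (\<forall>x \<in> P. \<forall>y \<in> P. x \<noteq> y \<longrightarrow> nbhd V E x \<inter> nbhd V E y = {})"

definition maximal_open_packing :: "'a set \<Rightarrow> ('a \<Rightarrow> 'a \<Rightarrow> bool) \<Rightarrow> 'a set \<Rightarrow> bool" where
  "maximal_open_packing V E P \<longleftrightarrow> open_packing V E P \<and>
     (\<forall>Q. open_packing V E Q \<and> P \<subseteq> Q \<longrightarrow> Q = P)"

definition open_packing_number :: "'a set \<Rightarrow> ('a \<Rightarrow> 'a \<Rightarrow> bool) \<Rightarrow> nat" where
  "open_packing_number V E = Max (card ` {P. open_packing V E P})"

definition lower_open_packing_number :: "'a set \<Rightarrow> ('a \<Rightarrow> 'a \<Rightarrow> bool) \<Rightarrow> nat" where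
  "lower_open_packing_number V E = Min (card ` {P. maximal_open_packing V E P})"

definition in_U :: "'a set \<Rightarrow> ('a \<Rightarrow> 'a \<Rightarrow> bool) \<Rightarrow> bool" where
  "in_U V E \<longleftrightarrow> graph V E \<and> lower_open_packing_number V E = open_packing_number V E"

definition add_pendant :: "('a \<Rightarrow> 'a \<Rightarrow> bool) \<Rightarrow> 'a \<Rightarrow> 'a \<Rightarrow> ('a \<Rightarrow> 'a \<Rightarrow> bool)" where
  "add_pendant E s w = (\<lambda>x y. E x y \<or> (x = s \<and> y = w) \<or> (x = w \<and> y = s))"

definition del_vertex_rel :: "('a \<Rightarrow> 'a \<Rightarrow> bool) \<Rightarrow> 'a \<Rightarrow> ('a \<Rightarrow> 'a \<Rightarrow> bool)" where
  "del_vertex_rel E w = (\<lambda>x y. E x y \<and> x \<noteq> w \<and> y \<noteq> w)"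

end

theory Submission
  imports Defs "HOL-Combinatorics.Transposition"
begin

text \<open>Let \<open>s\<close> be a support vertex with leaf \<open>l\<close>. In the graph \<open>G'\<close> obtained by attaching a new
leaf \<open>w\<close> to \<open>s\<close>, the vertices \<open>l\<close> and \<open>w\<close> have the same neighbourhood \<open>{s}\<close>, so swapping them
is an automorphism, and no open packing contains both. Hence every (maximal) open packing
of \<open>G'\<close> can be moved by an automorphism to one avoiding \<open>w\<close>, and the open packings of \<open>G'\<close>
avoiding \<open>w\<close> are exactly the open packings of \<open>G\<close>, with maximality preserved. So \<open>G\<close> and \<open>G'\<close>
have the same sets of sizes of open packings and of maximal open packings, and
\<open>G \<in> \<U> \<longleftrightarrow> G' \<in> \<U>\<close>. Deleting one of two leaves at a strong support vertex is the inverse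
operation.\<close>

lemma leaf_nbhd:
  assumes "graph V E" "leaf V E l" "E s l"
  shows "nbhd V E l = {s}"
proof -
  have "s \<in> nbhd V E l" using assms unfolding graph_def nbhd_def by blast
  moreover have "card (nbhd V E l) = 1" using assms(2) by (simp add: leaf_def degree_def)
  ultimately show ?thesis by (metis card_1_singletonE singletonD)
qed

lemma card_image_Collect_eqI:
  assumes "\<And>P. Q P \<Longrightarrow> R P"
    and "\<And>P. R P \<Longrightarrow> \<exists>P'. Q P' \<and> card P' = card P"
  shows "card ` {P. R P} = card ` {P. Q P}"
  using assms by (auto simp: image_iff) (metis mem_Collect_eq)+

definition involutive_automorphism :: "'a set \<Rightarrow> ('a \<Rightarrow> 'a \<Rightarrow> bool) \<Rightarrow> ('a \<Rightarrow> 'a) \<Rightarrow> bool" where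
  "involutive_automorphism V E \<sigma> \<longleftrightarrow> (\<forall>x. \<sigma> (\<sigma> x) = x) \<and> (\<forall>x. \<sigma> x \<in> V \<longleftrightarrow> x \<in> V)
     \<and> (\<forall>x y. E (\<sigma> x) (\<sigma> y) \<longleftrightarrow> E x y)"

lemma involutive_automorphism_id: "involutive_automorphism V E id"
  by (simp add: involutive_automorphism_def)

lemma involutive_automorphism_inj:
  "involutive_automorphism V E \<sigma> \<Longrightarrow> inj \<sigma>"
  unfolding involutive_automorphism_def by (metis injI)

lemma card_image_involutive_automorphism:
  "involutive_automorphism V E \<sigma> \<Longrightarrow> card (\<sigma> ` P) = card P"
  by (meson card_image inj_on_subset involutive_automorphism_inj subset_UNIV)

lemma involutive_automorphism_image_image:
  "involutive_automorphism V E \<sigma> \<Longrightarrow> \<sigma> ` \<sigma> ` A = A"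
  unfolding involutive_automorphism_def by (simp add: image_comp comp_def)

lemma involutive_automorphism_nbhd:
  assumes "involutive_automorphism V E \<sigma>"
  shows "nbhd V E (\<sigma> x) = \<sigma> ` nbhd V E x"
proof -
  have "nbhd V E (\<sigma> x) = {u \<in> V. E x (\<sigma> u)}"
    using assms unfolding involutive_automorphism_def nbhd_def by metis
  also have "\<dots> = \<sigma> ` nbhd V E x"
    using assms unfolding involutive_automorphism_def nbhd_def by (auto simp: image_iff) metis
  finally show ?thesis .
qed

lemma open_packing_image:
  assumes aut: "involutive_automorphism V E \<sigma>" and P: "open_packing V E P"
  shows "open_packing V E (\<sigma> ` P)"
  unfolding open_packing_def
proof (intro conjI ballI impI)
  show "\<sigma> ` P \<subseteq> V" using aut P unfolding involutive_automorphism_def open_packing_def by auto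
next
  fix x y assume "x \<in> \<sigma> ` P" "y \<in> \<sigma> ` P" "x \<noteq> y"
  then obtain a b where ab: "a \<in> P" "b \<in> P" "a \<noteq> b" "x = \<sigma> a" "y = \<sigma> b" by auto
  have "nbhd V E x \<inter> nbhd V E y = \<sigma> ` (nbhd V E a \<inter> nbhd V E b)"
    using ab involutive_automorphism_nbhd[OF aut]
      image_Int[OF involutive_automorphism_inj[OF aut]] by simp
  also have "\<dots> = {}" using P ab unfolding open_packing_def by auto
  finally show "nbhd V E x \<inter> nbhd V E y = {}" .
qed

lemma maximal_open_packing_image:
  assumes aut: "involutive_automorphism V E \<sigma>" and P: "maximal_open_packing V E P"
  shows "maximal_open_packing V E (\<sigma> ` P)"
  unfolding maximal_open_packing_def
proof (intro conjI allI impI)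
  show "open_packing V E (\<sigma> ` P)"
    using open_packing_image[OF aut] P unfolding maximal_open_packing_def by blast
next
  fix Q assume Q: "open_packing V E Q \<and> \<sigma> ` P \<subseteq> Q"
  then have "P \<subseteq> \<sigma> ` Q" using involutive_automorphism_image_image[OF aut] by (metis image_mono)
  with Q have "\<sigma> ` Q = P"
    using P open_packing_image[OF aut] unfolding maximal_open_packing_def by blast
  then show "Q = \<sigma> ` P" using involutive_automorphism_image_image[OF aut] by metis
qed

lemma transpose_twins_involutive_automorphism:
  assumes g: "graph V E" and "a \<in> V" "b \<in> V" and twins: "nbhd V E a = nbhd V E b"
  shows "involutive_automorphism V E (transpose a b)"
proof -
  have sym: "E x y \<longleftrightarrow> E y x" for x y using g unfolding graph_def by blast
  have "E a z \<longleftrightarrow> E b z" for z using g twins unfolding graph_def nbhd_def by blast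
  then have left: "E (transpose a b x) z \<longleftrightarrow> E x z" for x z by (simp add: transpose_def)
  have "E (transpose a b x) (transpose a b y) \<longleftrightarrow> E x y" for x y
    using left[of x] left[of y] sym by metis
  then show ?thesis using assms(2,3) unfolding involutive_automorphism_def
    by (auto simp: transpose_def)
qed

lemma graph_add_pendant:
  "graph V E \<Longrightarrow> s \<in> V \<Longrightarrow> w \<notin> V \<Longrightarrow> graph (insert w V) (add_pendant E s w)"
  unfolding graph_def add_pendant_def by auto

lemma nbhd_add_pendant:
  assumes "graph V E" "w \<notin> V" "x \<noteq> w"
  shows "nbhd (insert w V) (add_pendant E s w) x = nbhd V E x \<union> (if x = s then {w} else {})"
  using assms unfolding nbhd_def add_pendant_def graph_def by auto

lemma nbhd_add_pendant_new:
  assumes "graph V E" "s \<in> V" "w \<notin> V"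
  shows "nbhd (insert w V) (add_pendant E s w) w = {s}"
  using assms unfolding nbhd_def add_pendant_def graph_def by auto

text \<open>Two old vertices can only acquire the common neighbour \<open>w\<close> if both equal \<open>s\<close>.\<close>

lemma open_packing_add_pendant_iff:
  assumes g: "graph V E" and w: "w \<notin> V" and PV: "P \<subseteq> V"
  shows "open_packing (insert w V) (add_pendant E s w) P \<longleftrightarrow> open_packing V E P"
proof -
  have w_notin: "w \<notin> nbhd V E x" for x using w by (simp add: nbhd_def)
  have eq: "nbhd (insert w V) (add_pendant E s w) x \<inter> nbhd (insert w V) (add_pendant E s w) y
      = nbhd V E x \<inter> nbhd V E y" if "x \<in> P" "y \<in> P" "x \<noteq> y" for x y
  proof -
    have "x \<noteq> w" "y \<noteq> w" using that PV w by auto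
    with \<open>x \<noteq> y\<close> show ?thesis by (auto simp: nbhd_add_pendant[OF g w] w_notin)
  qed
  show ?thesis using PV unfolding open_packing_def by (simp add: eq subset_insertI2)
qed

lemma maximal_open_packing_of_add_pendant:
  assumes g: "graph V E" and w: "w \<notin> V" and PV: "P \<subseteq> V"
    and max: "maximal_open_packing (insert w V) (add_pendant E s w) P"
  shows "maximal_open_packing V E P"
  unfolding maximal_open_packing_def
proof (intro conjI allI impI)
  show "open_packing V E P"
    using max open_packing_add_pendant_iff[OF g w PV] by (simp add: maximal_open_packing_def)
  fix Q assume Q: "open_packing V E Q \<and> P \<subseteq> Q"
  then have "Q \<subseteq> V" by (simp add: open_packing_def)
  then show "Q = P"
    using Q max open_packing_add_pendant_iff[OF g w] unfolding maximal_open_packing_def by blast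
qed

locale pendant_extension =
  fixes V :: "'a set" and E :: "'a \<Rightarrow> 'a \<Rightarrow> bool" and s l w :: 'a
  assumes graph: "graph V E" and leaf: "leaf V E l" and adj: "E s l" and new: "w \<notin> V"
begin

abbreviation "V' \<equiv> insert w V"
abbreviation "E' \<equiv> add_pendant E s w"

lemma in_V: "s \<in> V" "l \<in> V"
  using graph adj unfolding graph_def by auto

lemma nbhd'_leaf: "nbhd V' E' l = {s}"
proof -
  have "l \<noteq> s" "l \<noteq> w" using graph adj new in_V unfolding graph_def by auto
  then show ?thesis using nbhd_add_pendant[OF graph new] leaf_nbhd[OF graph leaf adj] by simp
qed

lemma nbhd'_new: "nbhd V' E' w = {s}"
  using nbhd_add_pendant_new[OF graph in_V(1) new] .

lemma transpose_involutive_automorphism: "involutive_automorphism V' E' (transpose l w)"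
  using graph_add_pendant[OF graph in_V(1) new] in_V nbhd'_leaf nbhd'_new
  by (intro transpose_twins_involutive_automorphism) simp_all

lemma open_packing'_not_both: "open_packing V' E' P \<Longrightarrow> w \<in> P \<Longrightarrow> l \<notin> P"
  using nbhd'_leaf nbhd'_new new in_V unfolding open_packing_def by fastforce

lemma transpose_image_subset:
  assumes "open_packing V' E' P" "w \<in> P"
  shows "transpose l w ` P \<subseteq> V"
  using assms open_packing'_not_both[OF assms] in_V unfolding open_packing_def
  by (auto simp: transpose_def)

lemma open_packing'_move_into_V:
  assumes "open_packing V' E' P"
  obtains \<sigma> where "involutive_automorphism V' E' \<sigma>" "\<sigma> ` P \<subseteq> V"
proof (cases "w \<in> P")
  case True
  then show ?thesis
    using that transpose_involutive_automorphism transpose_image_subset[OF assms] by blast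
next
  case False
  then show ?thesis using that[OF involutive_automorphism_id] assms
    unfolding open_packing_def by auto
qed

lemma maximal_open_packing_add_pendant:
  assumes PV: "P \<subseteq> V" and max: "maximal_open_packing V E P"
  shows "maximal_open_packing V' E' P"
  unfolding maximal_open_packing_def
proof (intro conjI allI impI)
  have old: "open_packing V' E' Q \<longleftrightarrow> open_packing V E Q" if "Q \<subseteq> V" for Q
    using open_packing_add_pendant_iff[OF graph new that] .
  have extends: "Q = P" if "open_packing V' E' Q" "P \<subseteq> Q" "Q \<subseteq> V" for Q
    using that max old unfolding maximal_open_packing_def by blast
  show "open_packing V' E' P" using max old[OF PV] by (simp add: maximal_open_packing_def)
  fix Q assume Q: "open_packing V' E' Q \<and> P \<subseteq> Q"
  show "Q = P"
  proof (cases "w \<in> Q")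
    case False
    then show ?thesis using Q extends by (auto simp: open_packing_def)
  next
    case True
    \<comment> \<open>Swapping \<open>l\<close> and \<open>w\<close> fixes \<open>P\<close> but moves \<open>Q\<close> to a packing of \<open>G\<close> containing \<open>l \<notin> P\<close>.\<close>
    have lP: "l \<notin> P" using Q True open_packing'_not_both by blast
    have "w \<notin> P" using PV new by blast
    then have "transpose l w ` P = P" using lP by simp
    then have "P \<subseteq> transpose l w ` Q" using Q by blast
    moreover have "open_packing V' E' (transpose l w ` Q)"
      using open_packing_image[OF transpose_involutive_automorphism] Q by blast
    moreover have "transpose l w ` Q \<subseteq> V" using transpose_image_subset Q True by blast
    ultimately have "transpose l w ` Q = P" using extends by blast
    moreover have "l \<in> transpose l w ` Q" using True by (metis image_eqI transpose_apply_second)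
    ultimately show ?thesis using lP by blast
  qed
qed

lemma card_open_packings': "card ` {P. open_packing V' E' P} = card ` {P. open_packing V E P}"
proof (rule card_image_Collect_eqI)
  fix P assume "open_packing V E P"
  moreover have "P \<subseteq> V" using calculation by (simp add: open_packing_def)
  ultimately show "open_packing V' E' P" using open_packing_add_pendant_iff[OF graph new] by blast
next
  fix P assume P: "open_packing V' E' P"
  then obtain \<sigma> where aut: "involutive_automorphism V' E' \<sigma>" and PV: "\<sigma> ` P \<subseteq> V"
    by (rule open_packing'_move_into_V)
  have "open_packing V E (\<sigma> ` P)"
    using open_packing_image[OF aut P] open_packing_add_pendant_iff[OF graph new PV] by blast
  then show "\<exists>P'. open_packing V E P' \<and> card P' = card P"
    using card_image_involutive_automorphism[OF aut] by blast
qed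

lemma card_maximal_open_packings':
  "card ` {P. maximal_open_packing V' E' P} = card ` {P. maximal_open_packing V E P}"
proof (rule card_image_Collect_eqI)
  fix P assume "maximal_open_packing V E P"
  moreover have "P \<subseteq> V" using calculation by (simp add: maximal_open_packing_def open_packing_def)
  ultimately show "maximal_open_packing V' E' P" by (simp add: maximal_open_packing_add_pendant)
next
  fix P assume P: "maximal_open_packing V' E' P"
  then obtain \<sigma> where aut: "involutive_automorphism V' E' \<sigma>" and PV: "\<sigma> ` P \<subseteq> V"
    using open_packing'_move_into_V unfolding maximal_open_packing_def by blast
  have "maximal_open_packing V E (\<sigma> ` P)"
    using maximal_open_packing_of_add_pendant[OF graph new PV] maximal_open_packing_image[OF aut P]
    by blast
  then show "\<exists>P'. maximal_open_packing V E P' \<and> card P' = card P"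
    using card_image_involutive_automorphism[OF aut] by blast
qed

lemma in_U'_iff: "in_U V' E' \<longleftrightarrow> in_U V E"
  using graph graph_add_pendant[OF graph in_V(1) new]
  unfolding in_U_def open_packing_number_def lower_open_packing_number_def
    card_open_packings' card_maximal_open_packings' by simp

end

lemma in_U_add_pendant_iff:
  assumes "graph V E" "support_vertex V E s" "w \<notin> V"
  shows "in_U (insert w V) (add_pendant E s w) \<longleftrightarrow> in_U V E"
proof -
  obtain l where "leaf V E l" "E s l" using assms(2) unfolding support_vertex_def by blast
  then interpret pendant_extension V E s l w using assms by unfold_locales
  show ?thesis by (rule in_U'_iff)
qed

lemma graph_del_vertex: "graph V E \<Longrightarrow> graph (V - {w}) (del_vertex_rel E w)"
  unfolding graph_def del_vertex_rel_def by auto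

lemma add_pendant_del_leaf:
  assumes "graph V E" "leaf V E w" "E s w"
  shows "add_pendant (del_vertex_rel E w) s w = E"
proof -
  have "E w y \<longleftrightarrow> y = s" for y
    using leaf_nbhd[OF assms] assms(1) unfolding nbhd_def graph_def by blast
  then show ?thesis using assms(1) unfolding add_pendant_def del_vertex_rel_def graph_def
    by (intro ext) blast
qed

lemma support_vertex_del_leaf:
  assumes g: "graph V E" and "strong_support_vertex V E s" "E s w" "leaf V E w"
  shows "support_vertex (V - {w}) (del_vertex_rel E w) s"
proof -
  obtain l where l: "l \<in> V" "E s l" "leaf V E l" "l \<noteq> w"
    using assms(2) unfolding strong_support_vertex_def by metis
  have "s \<noteq> w" using g assms(3) unfolding graph_def by blast
  then have "nbhd (V - {w}) (del_vertex_rel E w) l = {s}"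
    using leaf_nbhd[OF g l(3,2)] l(4) unfolding nbhd_def del_vertex_rel_def by auto
  then have "leaf (V - {w}) (del_vertex_rel E w) l"
    using l unfolding leaf_def degree_def by simp
  then show ?thesis using l \<open>s \<noteq> w\<close> g
    unfolding support_vertex_def del_vertex_rel_def graph_def by auto
qed

theorem mainTheorem3:
  fixes V :: "'a set" and E :: "'a \<Rightarrow> 'a \<Rightarrow> bool"
  shows "(\<forall>s w. in_U V E \<and> support_vertex V E s \<and> w \<notin> V
            \<longrightarrow> in_U (insert w V) (add_pendant E s w))
       \<and> (\<forall>s w. in_U V E \<and> strong_support_vertex V E s \<and> E s w \<and> leaf V E w
            \<longrightarrow> in_U (V - {w}) (del_vertex_rel E w))"
proof (intro conjI allI impI)
  fix s w assume a: "in_U V E \<and> support_vertex V E s \<and> w \<notin> V"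
  then have "graph V E" by (simp add: in_U_def)
  with a show "in_U (insert w V) (add_pendant E s w)" by (simp add: in_U_add_pendant_iff)
next
  fix s w assume a: "in_U V E \<and> strong_support_vertex V E s \<and> E s w \<and> leaf V E w"
  then have g: "graph V E" by (simp add: in_U_def)
  have "in_U (insert w (V - {w})) (add_pendant (del_vertex_rel E w) s w)
      \<longleftrightarrow> in_U (V - {w}) (del_vertex_rel E w)"
    using a by (intro in_U_add_pendant_iff graph_del_vertex[OF g] support_vertex_del_leaf[OF g]) auto
  moreover have "insert w (V - {w}) = V" using a by (auto simp: leaf_def)
  moreover have "add_pendant (del_vertex_rel E w) s w = E" using a add_pendant_del_leaf[OF g] by blast
  ultimately show "in_U (V - {w}) (del_vertex_rel E w)" using a by simp
qed

end
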